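(* Let $\mathfrak L_1,\dots,\mathfrak L_n,\mathfrak L$ be complete lattices, let $(\mathcal F_\alpha)_{\alpha\in\mathcal O}$ with $\mathcal F_\alpha:\mathfrak L_1\times\dots\times\mathfrak L_n\to(\mathfrak L\to^+\mathfrak L)$ be a family that is $\liminf$-pullable in all arguments, and let $\phi:\mathcal O\to\mathcal O$ be monotone. Then for every nonzero limit ordinal $\lambda\in\mathcal O$ and all $\mathcal G_i:\mathcal O\to\mathfrak L_i$ ($i=1,\dots,n$), $$\mu^{\liminf_\lambda\phi}\big(\mathcal F_\lambda(\liminf_\lambda\vec{\mathcal G})\big)\sqsubseteq\liminf_{\alpha\to\lambda}\mu^{\phi(\alpha)}\big(\mathcal F_\alpha(\vec{\mathcal G}_\alpha)\big).$$ If moreover $\phi$ is lower semi-continuous (i.e. $\phi(\lambda)\le\liminf_\lambda\phi$ for all nonzero limits $\lambda$), then even $$\mu^{\phi(\lambda)}\big(\mathcal F_\lambda(\liminf_\lambda\vec{\mathcal G})\big)\sqsubseteq\liminf_{\alpha\to\lambda}\mu^{\phi(\alpha)}\big(\mathcal F_\alpha(\vec{\mathcal G}_\alpha)\big).$$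
   Context: $\mathcal O$ is the set of ordinals $\le\top_{\mathsf{ord}}$ for a fixed ordinal $\top_{\mathsf{ord}}$ ($=\beth_\omega$). For $g:\mathcal O\to\mathfrak L$ into a complete lattice and a nonzero limit $\lambda$: $\liminf_\lambda g=\liminf_{\alpha\to\lambda}g(\alpha)=\sup_{\alpha_0<\lambda}\inf_{\alpha_0\le\alpha<\lambda}g(\alpha)$, $\limsup_{\alpha\to\lambda}g(\alpha)=\inf_{\alpha_0<\lambda}\sup_{\alpha_0\le\alpha<\lambda}g(\alpha)$; on products, componentwise. $\mathfrak L\to^+\mathfrak L$ = monotone maps. For $f:\mathfrak L\to\mathfrak L$, $g\in\mathfrak L$: $f^0(g)=g$, $f^{\alpha+1}(g)=f(f^\alpha(g))$, $f^\lambda(g)=\limsup_{\alpha\to\lambda}f^\alpha(g)$; $\mu^\alpha f:=f^\alpha(\bot)$. A family $(\mathcal F_\alpha)_{\alpha\in\mathcal O}$ of maps $\mathfrak K\to\mathfrak K'$ is $\liminf$-pullable if for all $\mathcal G:\mathcal O\to\mathfrak K$ and nonzero limits $\lambda$: $\mathcal F_\gamma(\liminf_{\alpha\to\lambda}\mathcal G_\alpha)\sqsubseteq\liminf_{\alpha\to\lambda}\mathcal F_\gamma(\mathcal G_\alpha)$ for all $\gamma\in\mathcal O$, and $\mathcal F_\lambda(\liminf_{\alpha\to\lambda}\mathcal G_\alpha)\sqsubseteq\liminf_{\alpha\to\lambda}\mathcal F_\alpha(\mathcal G_\alpha)$. "$\liminf$-pullable in all arguments" means the family $(\vec{\mathcal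 G},\mathcal X)\mapsto\mathcal F_\alpha(\vec{\mathcal G})(\mathcal X)$ is $\liminf$-pullable. *)

theory Defs
  imports Main "HOL-Library.Product_Order"
begin

text \<open>The ordinals O = [0, top_ord] are modelled by an arbitrary type 'o that is
  both a well-order and a complete linear order (i.e. a well-order with a greatest
  element); bot is the ordinal 0 and top is top_ord.\<close>

definition is_succ :: "'o::wellorder \<Rightarrow> bool" where
  "is_succ a \<longleftrightarrow> (\<exists>b<a. \<forall>c<a. c \<le> b)"

definition ord_pred :: "'o::wellorder \<Rightarrow> 'o" where
  "ord_pred a = (GREATEST b. b < a)"

definition nonzero_limit :: "'o::{wellorder,complete_linorder} \<Rightarrow> bool" where
  "nonzero_limit l \<longleftrightarrow> bot < l \<and> \<not> is_succ l"

definition ord_liminf :: "'o::wellorder \<Rightarrow> ('o \<Rightarrow> 'a::complete_lattice) \<Rightarrow> 'a" where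
  "ord_liminf l g = (SUP a0\<in>{..<l}. INF a\<in>{a0..<l}. g a)"

definition ord_limsup :: "'o::wellorder \<Rightarrow> ('o \<Rightarrow> 'a::complete_lattice) \<Rightarrow> 'a" where
  "ord_limsup l g = (INF a0\<in>{..<l}. SUP a\<in>{a0..<l}. g a)"

definition ord_iter :: "('a::complete_lattice \<Rightarrow> 'a) \<Rightarrow> 'a \<Rightarrow> 'o::{wellorder,complete_linorder} \<Rightarrow> 'a" where
  "ord_iter f g = wfrec {(x, y). x < y}
     (\<lambda>r a. if a = bot then g else if is_succ a then f (r (ord_pred a)) else ord_limsup a r)"

definition ord_mu :: "'o::{wellorder,complete_linorder} \<Rightarrow> ('a::complete_lattice \<Rightarrow> 'a) \<Rightarrow> 'a" where
  "ord_mu a f = ord_iter f bot a"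

definition liminf_pullable ::
  "('o::{wellorder,complete_linorder} \<Rightarrow> 'a::complete_lattice \<Rightarrow> 'b::complete_lattice) \<Rightarrow> bool" where
  "liminf_pullable F \<longleftrightarrow>
     (\<forall>G l. nonzero_limit l \<longrightarrow>
        (\<forall>c. F c (ord_liminf l G) \<le> ord_liminf l (\<lambda>a. F c (G a))) \<and>
        F l (ord_liminf l G) \<le> ord_liminf l (\<lambda>a. F a (G a)))"

end

theory Submission
  imports Defs
begin

text \<open>By transfinite induction on c, the c-th Kleene approximant of the limit operator
  F lam (liminf G) lies below the liminf of the c-th approximants of F a (G a): successor
  steps use the pullability of F in both arguments, limit steps the fact that a limit
  approximant is the supremum of the earlier ones. The index liminf phi of a monotone phi
  is the supremum of the phi a, a < lam, and every approximant below it is eventually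
  dominated by the approximants at phi a. Lower semi-continuity of phi then gives the
  second claim by monotonicity of the approximants in the ordinal.\<close>

lemma is_succ_ord_pred:
  assumes "is_succ (a::'o::wellorder)"
  shows ord_pred_less: "ord_pred a < a"
    and le_ord_pred: "c < a \<Longrightarrow> c \<le> ord_pred a"
proof -
  obtain b where b: "b < a" "\<forall>c<a. c \<le> b" using assms unfolding is_succ_def by blast
  have "ord_pred a = b" unfolding ord_pred_def
    by (rule Greatest_equality) (use b in auto)
  then show "ord_pred a < a" "c < a \<Longrightarrow> c \<le> ord_pred a" using b by auto
qed

lemma not_is_succ_SUP:
  fixes phi :: "'a \<Rightarrow> 'o::{wellorder,complete_linorder}"
  assumes "\<And>x. x \<in> A \<Longrightarrow> phi x < (SUP x\<in>A. phi x)"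
  shows "\<not> is_succ (SUP x\<in>A. phi x)"
proof
  assume "is_succ (SUP x\<in>A. phi x)"
  then obtain b where b: "b < (SUP x\<in>A. phi x)" "\<forall>c<(SUP x\<in>A. phi x). c \<le> b"
    unfolding is_succ_def by blast
  have "(SUP x\<in>A. phi x) \<le> b" using assms b(2) by (intro SUP_least) auto
  then show False using b(1) by simp
qed


lemma ord_limsup_cong:
  assumes "\<And>z. z < a \<Longrightarrow> f z = g z"
  shows "ord_limsup a f = ord_limsup a g"
  unfolding ord_limsup_def
  by (rule INF_cong[OF refl], rule SUP_cong) (auto intro: assms)

lemma ord_iter_unfold:
  "ord_iter f g a = (if a = bot then g else if is_succ a then f (ord_iter f g (ord_pred a))
      else ord_limsup a (ord_iter f g))"
proof -
  have "ord_iter f g a = (\<lambda>r a. if a = bot then g else if is_succ a then f (r (ord_pred a))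
      else ord_limsup a r) (cut (ord_iter f g) {(x, y). x < y} a) a"
    unfolding ord_iter_def by (rule wfrec[OF wf])
  also have "\<dots> = (if a = bot then g else if is_succ a then f (ord_iter f g (ord_pred a))
      else ord_limsup a (ord_iter f g))"
    using ord_pred_less[of a] by (auto simp: cut_apply intro!: ord_limsup_cong)
  finally show ?thesis .
qed

lemma ord_mu_bot [simp]: "ord_mu bot f = bot"
  unfolding ord_mu_def by (subst ord_iter_unfold) simp

lemma ord_mu_succ: "is_succ c \<Longrightarrow> ord_mu c f = f (ord_mu (ord_pred c) f)"
  unfolding ord_mu_def by (subst ord_iter_unfold) (auto simp: is_succ_def)

lemma ord_mu_limsup:
  "c \<noteq> bot \<Longrightarrow> \<not> is_succ c \<Longrightarrow> ord_mu c f = ord_limsup c (\<lambda>d. ord_mu d f)"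
  unfolding ord_mu_def by (subst ord_iter_unfold) simp

lemma ord_limsup_increasing:
  fixes x :: "'o::{wellorder,complete_linorder} \<Rightarrow> 'a::complete_lattice"
  assumes "bot < a" "\<And>d e. d \<le> e \<Longrightarrow> e < a \<Longrightarrow> x d \<le> x e"
  shows "ord_limsup a x = (SUP d\<in>{..<a}. x d)"
proof -
  have tail: "(SUP d\<in>{a0..<a}. x d) = (SUP d\<in>{..<a}. x d)" if "a0 < a" for a0
  proof (rule antisym)
    show "(SUP d\<in>{a0..<a}. x d) \<le> (SUP d\<in>{..<a}. x d)" by (rule SUP_subset_mono) auto
    have "x d \<le> (SUP d\<in>{a0..<a}. x d)" if "d < a" for d
    proof (cases "a0 \<le> d")
      case True
      then show ?thesis using \<open>d < a\<close> by (intro SUP_upper) auto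
    next
      case False
      then have "x d \<le> x a0" using assms(2) \<open>a0 < a\<close> by auto
      also have "\<dots> \<le> (SUP d\<in>{a0..<a}. x d)" using \<open>a0 < a\<close> by (intro SUP_upper) auto
      finally show ?thesis .
    qed
    then show "(SUP d\<in>{..<a}. x d) \<le> (SUP d\<in>{a0..<a}. x d)" by (intro SUP_least) auto
  qed
  have "ord_limsup a x = (INF a0\<in>{..<a}. SUP d\<in>{..<a}. x d)"
    unfolding ord_limsup_def by (intro INF_cong) (auto simp: tail)
  also have "\<dots> = (SUP d\<in>{..<a}. x d)" using assms(1) by (subst INF_constant) auto
  finally show ?thesis .
qed

text \<open>Monotonicity in the ordinal and post-fixedness have to be proved simultaneously:
  the successor case of the former needs the latter at the predecessor.\<close>

lemma ord_mu_increasing_postfixed: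
  fixes c :: "'o::{wellorder,complete_linorder}"
  assumes f: "mono f"
  shows "(\<forall>d<c. ord_mu d f \<le> ord_mu c f) \<and> ord_mu c f \<le> f (ord_mu c f)"
proof (induction c rule: less_induct)
  case (less c)
  consider "c = bot" | "is_succ c" | "c \<noteq> bot" "\<not> is_succ c" by blast
  then show ?case
  proof cases
    case 1
    then show ?thesis by (simp add: bot_less)
  next
    case 2
    let ?b = "ord_pred c"
    have b: "?b < c" using ord_pred_less[OF 2] .
    have eq: "ord_mu c f = f (ord_mu ?b f)" using ord_mu_succ[OF 2] .
    have b_le: "ord_mu ?b f \<le> ord_mu c f" using less.IH[OF b] eq by simp
    have "ord_mu d f \<le> ord_mu c f" if "d < c" for d
    proof (cases "d = ?b")
      case False
      then have "d < ?b" using le_ord_pred[OF 2 that] by simp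
      then show ?thesis using less.IH[OF b] b_le by (meson order_trans)
    qed (use b_le in simp)
    moreover have "ord_mu c f \<le> f (ord_mu c f)" using eq b_le f by (simp add: monoD)
    ultimately show ?thesis by blast
  next
    case 3
    have "ord_mu c f = ord_limsup c (\<lambda>d. ord_mu d f)" using ord_mu_limsup[OF 3] .
    also have "\<dots> = (SUP d\<in>{..<c}. ord_mu d f)"
      using 3 less.IH by (intro ord_limsup_increasing) (auto simp: bot_less order.order_iff_strict)
    finally have eq: "ord_mu c f = (SUP d\<in>{..<c}. ord_mu d f)" .
    have up: "ord_mu d f \<le> ord_mu c f" if "d < c" for d
      using that eq by (auto intro: SUP_upper)
    have "ord_mu d f \<le> f (ord_mu c f)" if "d < c" for d
      using less.IH[OF that] monoD[OF f up[OF that]] by (meson order_trans)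
    then have "ord_mu c f \<le> f (ord_mu c f)" by (subst eq) (auto intro: SUP_least)
    with up show ?thesis by blast
  qed
qed

lemma ord_mu_mono:
  fixes c :: "'o::{wellorder,complete_linorder}"
  assumes "mono f" "d \<le> c"
  shows "ord_mu d f \<le> ord_mu c f"
  using ord_mu_increasing_postfixed[OF assms(1), of c] assms(2) by (cases "d = c") auto

lemma ord_mu_limit:
  fixes c :: "'o::{wellorder,complete_linorder}"
  assumes "mono f" "c \<noteq> bot" "\<not> is_succ c"
  shows "ord_mu c f = (SUP d\<in>{..<c}. ord_mu d f)"
  unfolding ord_mu_limsup[OF assms(2,3)]
  using assms by (intro ord_limsup_increasing ord_mu_mono) (auto simp: bot_less)

lemma ord_mu_SUP_le:
  fixes phi :: "'a \<Rightarrow> 'o::{wellorder,complete_linorder}"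
  assumes f: "mono f" and le: "\<And>d x. x \<in> A \<Longrightarrow> d \<le> phi x \<Longrightarrow> ord_mu d f \<le> R"
  shows "ord_mu (SUP x\<in>A. phi x) f \<le> R"
proof (cases "\<exists>x\<in>A. (SUP x\<in>A. phi x) \<le> phi x")
  case True
  then show ?thesis using le by blast
next
  case False
  then have lt: "\<And>x. x \<in> A \<Longrightarrow> phi x < (SUP x\<in>A. phi x)" by (meson not_le)
  show ?thesis
  proof (cases "(SUP x\<in>A. phi x) = bot")
    case False
    have "ord_mu d f \<le> R" if "d < (SUP x\<in>A. phi x)" for d
    proof -
      obtain x where "x \<in> A" "d < phi x" using \<open>d < (SUP x\<in>A. phi x)\<close> by (auto simp: less_SUP_iff)
      then show ?thesis using le by simp
    qed
    then show ?thesis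
      by (subst ord_mu_limit[OF f False not_is_succ_SUP[OF lt]]) (auto intro: SUP_least)
  qed simp
qed


lemma ord_liminf_Pair:
  "ord_liminf l (\<lambda>a. (G a, H a)) = (ord_liminf l G, ord_liminf l H)"
  unfolding ord_liminf_def by (rule prod_eqI) (simp_all add: fst_SUP snd_SUP fst_INF snd_INF)

lemma ord_liminf_eventually_mono:
  fixes f g :: "'o::wellorder \<Rightarrow> 'a::complete_lattice"
  assumes "a0 < l" "\<And>a. a0 \<le> a \<Longrightarrow> a < l \<Longrightarrow> f a \<le> g a"
  shows "ord_liminf l f \<le> ord_liminf l g"
  unfolding ord_liminf_def
proof (rule SUP_least)
  fix b0 assume b0: "b0 \<in> {..<l}"
  let ?m = "max a0 b0"
  have "(INF a\<in>{b0..<l}. f a) \<le> (INF a\<in>{?m..<l}. f a)" by (rule INF_superset_mono) auto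
  also have "\<dots> \<le> (INF a\<in>{?m..<l}. g a)"
    using assms(2) by (intro INF_mono) (metis atLeastLessThan_iff max.bounded_iff order_refl)
  also have "\<dots> \<le> (SUP a0\<in>{..<l}. INF a\<in>{a0..<l}. g a)" using assms(1) b0 by (intro SUP_upper) auto
  finally show "(INF a\<in>{b0..<l}. f a) \<le> (SUP a0\<in>{..<l}. INF a\<in>{a0..<l}. g a)" .
qed

lemma ord_liminf_mono_fun:
  fixes g :: "'o::wellorder \<Rightarrow> 'a::complete_lattice"
  assumes "mono g"
  shows "ord_liminf l g = (SUP a\<in>{..<l}. g a)"
  unfolding ord_liminf_def
  by (rule SUP_cong[OF refl], rule antisym) (auto intro!: INF_lower INF_greatest monoD[OF assms])


lemma ord_mu_liminf_pullable:
  fixes F :: "'o::{wellorder,complete_linorder} \<Rightarrow> 'k::complete_lattice \<Rightarrow> 'l::complete_lattice \<Rightarrow> 'l"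
  assumes F_mono: "\<And>a x. mono (F a x)"
    and pull: "liminf_pullable (\<lambda>a (x, X). F a x X)"
    and lim: "nonzero_limit lam"
  shows "ord_mu c (F lam (ord_liminf lam G)) \<le> ord_liminf lam (\<lambda>a. ord_mu c (F a (G a)))"
proof (induction c rule: less_induct)
  case (less c)
  let ?L = "F lam (ord_liminf lam G)"
  consider "c = bot" | "is_succ c" | "c \<noteq> bot" "\<not> is_succ c" by blast
  then show ?case
  proof cases
    case 1
    then show ?thesis by simp
  next
    case 2
    let ?b = "ord_pred c"
    let ?y = "\<lambda>a. ord_mu ?b (F a (G a))"
    have "ord_mu c ?L = ?L (ord_mu ?b ?L)" using ord_mu_succ[OF 2] .
    also have "\<dots> \<le> ?L (ord_liminf lam ?y)"
      using less.IH[OF ord_pred_less[OF 2]] F_mono by (simp add: monoD)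
    also have "\<dots> \<le> ord_liminf lam (\<lambda>a. F a (G a) (?y a))"
      using pull lim unfolding liminf_pullable_def
      by (drule_tac x="\<lambda>a. (G a, ?y a)" in spec) (simp add: ord_liminf_Pair)
    also have "\<dots> = ord_liminf lam (\<lambda>a. ord_mu c (F a (G a)))"
      by (simp add: ord_mu_succ[OF 2])
    finally show ?thesis .
  next
    case 3
    have "ord_mu d ?L \<le> ord_liminf lam (\<lambda>a. ord_mu c (F a (G a)))" if "d < c" for d
    proof -
      have "ord_mu d ?L \<le> ord_liminf lam (\<lambda>a. ord_mu d (F a (G a)))" using less.IH[OF that] .
      also have "\<dots> \<le> ord_liminf lam (\<lambda>a. ord_mu c (F a (G a)))"
        using lim that F_mono unfolding nonzero_limit_def
        by (intro ord_liminf_eventually_mono[of bot] ord_mu_mono) auto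
      finally show ?thesis .
    qed
    then show ?thesis by (subst ord_mu_limit[OF F_mono 3]) (auto intro: SUP_least)
  qed
qed

theorem theorem4p18:
  fixes F :: "'o::{wellorder,complete_linorder} \<Rightarrow> 'k::complete_lattice \<Rightarrow> 'l::complete_lattice \<Rightarrow> 'l"
    and phi :: "'o \<Rightarrow> 'o"
    and G :: "'o \<Rightarrow> 'k"
    and lam :: 'o
  assumes F_mono: "\<And>a x. mono (F a x)"
    and pull: "liminf_pullable (\<lambda>a (x, X). F a x X)"
    and phi_mono: "mono phi"
    and lim: "nonzero_limit lam"
  shows "ord_mu (ord_liminf lam phi) (F lam (ord_liminf lam G))
           \<le> ord_liminf lam (\<lambda>a. ord_mu (phi a) (F a (G a)))
         \<and> ((\<forall>l. nonzero_limit l \<longrightarrow> phi l \<le> ord_liminf l phi) \<longrightarrow>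
         ord_mu (phi lam) (F lam (ord_liminf lam G))
           \<le> ord_liminf lam (\<lambda>a. ord_mu (phi a) (F a (G a))))"
proof -
  let ?L = "F lam (ord_liminf lam G)"
  let ?R = "ord_liminf lam (\<lambda>a. ord_mu (phi a) (F a (G a)))"
  have "ord_mu d ?L \<le> ?R" if "a0 < lam" "d \<le> phi a0" for d a0
  proof -
    have "ord_mu d ?L \<le> ord_liminf lam (\<lambda>a. ord_mu d (F a (G a)))"
      by (rule ord_mu_liminf_pullable[OF F_mono pull lim])
    also have "\<dots> \<le> ?R"
      using that F_mono monoD[OF phi_mono]
      by (intro ord_liminf_eventually_mono[of a0] ord_mu_mono) (auto intro: order_trans)
    finally show ?thesis .
  qed
  then have first: "ord_mu (ord_liminf lam phi) ?L \<le> ?R"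
    unfolding ord_liminf_mono_fun[OF phi_mono] by (intro ord_mu_SUP_le[OF F_mono]) auto
  moreover have "ord_mu (phi lam) ?L \<le> ?R" if "phi lam \<le> ord_liminf lam phi"
    using first ord_mu_mono[OF F_mono that] by (rule order_trans[rotated])
  ultimately show ?thesis using lim by blast
qed

end
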